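(* Let $m\ge2$ be an integer and let $g\in C^\infty(\mathbb{R})$ with $g(0)>0$. Let $\tilde g\in C^\infty(\mathbb{R})$ satisfy, for some $0<\delta<1$: $\tilde g(x)=g(x)$ for $|x|\le\delta$, $\tilde g(x)=\frac9{10}g(0)$ for $|x|\ge1$, and $0\le -x\tilde g'(x)<\frac15 g(0)$, $|x^2\tilde g''(x)|<\frac15g(0)$ for all $x\in\mathbb{R}$; and suppose $\frac9{10}g(0)\le\tilde g\le g(0)$ on $\mathbb{R}$. Put $\hat g=\tilde g/g(0)$, $p(s,\tilde X)=\hat g(\tilde Xs)s^{2m}-s$, and let $\alpha\in C^\infty([0,\infty))$ be the function with $\frac{\partial p}{\partial s}(\alpha(\tilde X),\tilde X)=0$ and $(2m)^{-\frac1{2m-1}}\le\alpha(\tilde X)\le(\frac45\cdot2m)^{-\frac1{2m-1}}$ for all $\tilde X\ge0$. Define $a(\tilde X)=-p(\alpha(\tilde X),\tilde X)$. Then for all $\tilde X\ge0$, $$a(\tilde X)\ge a(0)=a:=(2m)^{-\frac1{2m-1}}-(2m)^{-\frac{2m}{2m-1}}.$$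
   Context: Existence (and uniqueness within the interval $[(2m)^{-1/(2m-1)},(\frac45 2m)^{-1/(2m-1)}]$, since $p$ is strictly convex in $s$ there) of such a smooth function $\alpha$ is part of the setting. *)

theory Defs
  imports "HOL-Analysis.Analysis"
begin

definition smooth_on :: "real set \<Rightarrow> (real \<Rightarrow> real) \<Rightarrow> bool" where
  "smooth_on S f \<longleftrightarrow> (\<exists>D :: nat \<Rightarrow> real \<Rightarrow> real. D 0 = f \<and>
     (\<forall>n. \<forall>x\<in>S. (D n has_real_derivative D (Suc n) x) (at x within S)))"

end

theory Submission
  imports Defs
begin

(* For fixed X the profile q(t) = gt(X t) t^n / g(0) - t, n = 2m, is convex on t >= 0:
   g(0) q''(t) = t^(n-2) (y^2 gt''(y) + 2n y gt'(y) + n(n-1) gt(y)) with y = X t, and the bounds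
   on gt make the bracket nonnegative. As alpha(X) is a critical point of q to the right of
   c = n^(-1/(n-1)), convexity gives q(alpha(X)) <= q(c) <= c^n - c, the last step by gt <= g(0).
   At X = 0 the profile is t^n - t, whose only positive critical point is c, so a(0) = c - c^n.
   The smoothness of g and alpha, the value of gt for |x| >= 1 and the upper bound on alpha
   are not needed. *)

lemma smooth_on_UNIV_DERIV:
  assumes "smooth_on UNIV f"
  shows "(f has_real_derivative deriv f x) (at x)"
proof -
  from assms obtain D where "D 0 = f" and "\<And>n x. (D n has_real_derivative D (Suc n) x) (at x)"
    unfolding smooth_on_def by auto
  then show ?thesis
    by (metis DERIV_imp_deriv)
qed

lemma smooth_on_UNIV_deriv:
  assumes "smooth_on UNIV f"
  shows "smooth_on UNIV (deriv f)"
proof -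
  from assms obtain D where f: "D 0 = f" and D: "\<And>n x. (D n has_real_derivative D (Suc n) x) (at x)"
    unfolding smooth_on_def by auto
  have "deriv f = D 1"
  proof
    fix x
    show "deriv f x = D 1 x"
      using DERIV_imp_deriv[OF D[of 0 x]] by (simp add: f)
  qed
  then show ?thesis
    unfolding smooth_on_def using D by (intro exI[of _ "\<lambda>n. D (Suc n)"]) auto
qed

lemma DERIV_scaled_times_power:
  fixes h h' :: "real \<Rightarrow> real"
  assumes "(h has_real_derivative h' (X * t)) (at (X * t))"
  shows "((\<lambda>t. h (X * t) * t ^ n) has_real_derivative
      X * h' (X * t) * t ^ n + real n * h (X * t) * t ^ (n - 1)) (at t)"
proof -
  have "((\<lambda>t. h (X * t)) has_real_derivative h' (X * t) * X) (at t)"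
    using DERIV_chain2[OF assms DERIV_cmult_Id] .
  then show ?thesis
    by (auto intro!: derivative_eq_intros)
qed

lemma DERIV_scaled_profile:
  fixes h h' :: "real \<Rightarrow> real"
  assumes "(h has_real_derivative h' (X * t)) (at (X * t))"
  shows "((\<lambda>t. h (X * t) / G * t ^ n - t) has_real_derivative
      (X * h' (X * t) * t ^ n + real n * h (X * t) * t ^ (n - 1)) / G - 1) (at t)"
proof -
  from DERIV_diff[OF DERIV_cdivide[OF DERIV_scaled_times_power[of h h' X t, OF assms]] DERIV_ident]
  show ?thesis
    by simp
qed

lemma convex_critical_point_le:
  fixes f f' f'' :: "real \<Rightarrow> real"
  assumes "a \<le> b"
    and f': "\<And>t. a \<le> t \<Longrightarrow> t \<le> b \<Longrightarrow> (f has_real_derivative f' t) (at t)"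
    and f'': "\<And>t. a \<le> t \<Longrightarrow> t \<le> b \<Longrightarrow> (f' has_real_derivative f'' t) (at t)"
    and convex: "\<And>t. a \<le> t \<Longrightarrow> t \<le> b \<Longrightarrow> 0 \<le> f'' t"
    and critical: "f' b = 0"
  shows "f b \<le> f a"
proof (rule DERIV_nonpos_imp_nonincreasing[OF \<open>a \<le> b\<close>])
  fix t assume t: "a \<le> t" "t \<le> b"
  have "f' t \<le> f' b"
  proof (rule DERIV_nonneg_imp_nondecreasing[OF \<open>t \<le> b\<close>])
    fix x assume "t \<le> x" "x \<le> b"
    with t f'' convex show "\<exists>y. (f' has_real_derivative y) (at x) \<and> 0 \<le> y"
      by (meson order_trans)
  qed
  with t f' critical show "\<exists>y. (f has_real_derivative y) (at t) \<and> y \<le> 0"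
    by auto
qed

lemma weighted_profile_nonneg:
  fixes n :: nat and G y h0 h1 h2 :: real
  assumes "2 \<le> n" "0 \<le> G" "9/10 * G \<le> h0" "- G/5 \<le> y * h1" "- G/5 \<le> y^2 * h2"
  shows "0 \<le> y^2 * h2 + 2 * real n * (y * h1) + real n * (real n - 1) * h0"
proof -
  have n: "2 \<le> real n"
    using assms(1) by simp
  have "y^2 * h2 + 2 * real n * (y * h1) + real n * (real n - 1) * h0 =
      (y^2 * h2 + G/5) + 2 * real n * (y * h1 + G/5) + real n * (real n - 1) * (h0 - 9/10 * G)
      + ((9 * real n + 5) * (real n - 2) + 8) * G / 10"
    by (simp add: field_simps)
  moreover have "0 \<le> 2 * real n * (y * h1 + G/5)"
    using assms by (intro mult_nonneg_nonneg) auto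
  moreover have "0 \<le> real n * (real n - 1) * (h0 - 9/10 * G)"
    using assms n by (intro mult_nonneg_nonneg) auto
  moreover have "0 \<le> ((9 * real n + 5) * (real n - 2) + 8) * G / 10"
    using assms n by simp
  ultimately show ?thesis
    using assms(5) by linarith
qed

lemma scaled_profile_critical_point_le:
  fixes h :: "real \<Rightarrow> real" and n :: nat and G X c s :: real
  assumes h: "smooth_on UNIV h" and G: "0 < G" and n: "2 \<le> n"
    and h_lower: "\<And>y. 9/10 * G \<le> h y"
    and h_d1: "\<And>y. - G/5 \<le> y * deriv h y"
    and h_d2: "\<And>y. - G/5 \<le> y^2 * deriv (deriv h) y"
    and c: "0 \<le> c" "c \<le> s"
    and critical: "deriv (\<lambda>t. h (X * t) / G * t ^ n - t) s = 0"
  shows "h (X * s) / G * s ^ n - s \<le> h (X * c) / G * c ^ n - c"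
proof -
  define q where "q = (\<lambda>t. h (X * t) / G * t ^ n - t)"
  define q' where "q' t = (X * deriv h (X * t) * t ^ n + real n * h (X * t) * t ^ (n - 1)) / G - 1" for t
  define q'' where "q'' t = (X * (X * deriv (deriv h) (X * t) * t ^ n + real n * deriv h (X * t) * t ^ (n - 1))
      + real n * (X * deriv h (X * t) * t ^ (n - 1) + real (n - 1) * h (X * t) * t ^ (n - 1 - 1))) / G" for t
  have dh: "(h has_real_derivative deriv h y) (at y)" for y
    using smooth_on_UNIV_DERIV[OF h] .
  have ddh: "(deriv h has_real_derivative deriv (deriv h) y) (at y)" for y
    using smooth_on_UNIV_DERIV[OF smooth_on_UNIV_deriv[OF h]] .
  have dq: "(q has_real_derivative q' t) (at t)" for t
    unfolding q_def q'_def by (rule DERIV_scaled_profile) (rule dh)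
  have dq': "(q' has_real_derivative q'' t) (at t)" for t
  proof -
    have d1: "((\<lambda>t. deriv h (X * t) * t ^ n) has_real_derivative
        X * deriv (deriv h) (X * t) * t ^ n + real n * deriv h (X * t) * t ^ (n - 1)) (at t)"
      by (rule DERIV_scaled_times_power) (rule ddh)
    have d0: "((\<lambda>t. h (X * t) * t ^ (n - 1)) has_real_derivative
        X * deriv h (X * t) * t ^ (n - 1) + real (n - 1) * h (X * t) * t ^ (n - 1 - 1)) (at t)"
      by (rule DERIV_scaled_times_power) (rule dh)
    have "q' = (\<lambda>t. (X * (deriv h (X * t) * t ^ n) + real n * (h (X * t) * t ^ (n - 1))) / G - 1)"
      by (simp add: q'_def fun_eq_iff algebra_simps)
    with DERIV_diff[OF DERIV_cdivide[OF DERIV_add[OF DERIV_cmult[OF d1] DERIV_cmult[OF d0]]] DERIV_const]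
    show ?thesis
      by (simp add: q''_def)
  qed
  have q''_nonneg: "0 \<le> q'' t" if "0 \<le> t" for t
  proof -
    define k where "k = n - 2"
    have nk: "n = Suc (Suc k)"
      using n by (simp add: k_def)
    have pow: "t ^ n = t ^ k * t^2" "t ^ (n - 1) = t ^ k * t" "n - 1 - 1 = k"
      by (simp_all add: nk power2_eq_square)
    have n1: "real (n - 1) = real n - 1"
      using n by simp
    have "q'' t = t ^ k / G * ((X * t)^2 * deriv (deriv h) (X * t)
        + 2 * real n * ((X * t) * deriv h (X * t)) + real n * (real n - 1) * h (X * t))"
      unfolding q''_def pow n1 using G by (simp add: power2_eq_square field_simps)
    also have "0 \<le> \<dots>"
      using that G n h_lower h_d1 h_d2
      by (intro mult_nonneg_nonneg weighted_profile_nonneg[where G = G]) auto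
    finally show ?thesis .
  qed
  have "q s \<le> q c"
  proof (rule convex_critical_point_le[OF \<open>c \<le> s\<close>])
    show "(q has_real_derivative q' t) (at t)" "(q' has_real_derivative q'' t) (at t)" for t
      using dq dq' .
    show "0 \<le> q'' t" if "c \<le> t" for t
      using that c q''_nonneg by simp
    show "q' s = 0"
      using critical DERIV_imp_deriv[OF dq] unfolding q_def by simp
  qed
  then show ?thesis
    unfolding q_def .
qed

lemma power_critical_point_eq_powr:
  fixes n :: nat and s :: real
  assumes n: "2 \<le> n" and s: "0 \<le> s" and critical: "real n * s ^ (n - 1) = 1"
  shows "s = real n powr (- 1 / (real n - 1))"
proof -
  define c where "c = real n powr (- 1 / (real n - 1))"
  have "0 < c"
    using n by (simp add: c_def)
  then have "c ^ (n - 1) = c powr real (n - 1)"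
    by (rule powr_realpow[symmetric])
  also have "\<dots> = real n powr (- 1)"
    using n by (simp add: c_def powr_powr of_nat_diff)
  also have "\<dots> = s ^ (n - 1)"
    using critical n by (simp add: powr_minus field_simps)
  finally have "s ^ (n - 1) = c ^ (n - 1)" ..
  then show ?thesis
    using n s by (simp add: c_def power_eq_iff_eq_base)
qed

lemma scaled_profile_critical_point_at_zero:
  fixes h :: "real \<Rightarrow> real" and n :: nat and G s :: real
  assumes h: "smooth_on UNIV h" and h0: "h 0 = G" and G: "0 < G" and n: "2 \<le> n"
    and s: "0 \<le> s" and critical: "deriv (\<lambda>t. h (0 * t) / G * t ^ n - t) s = 0"
  shows "s = real n powr (- 1 / (real n - 1))"
proof (rule power_critical_point_eq_powr[OF n s])
  have "((\<lambda>t. h (0 * t) / G * t ^ n - t) has_real_derivative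
      (0 * deriv h (0 * s) * s ^ n + real n * h (0 * s) * s ^ (n - 1)) / G - 1) (at s)"
    by (rule DERIV_scaled_profile) (rule smooth_on_UNIV_DERIV[OF h])
  then show "real n * s ^ (n - 1) = 1"
    using critical DERIV_imp_deriv h0 G by fastforce
qed

theorem lemma6p7:
  fixes m :: nat and g gt \<alpha> :: "real \<Rightarrow> real" and \<delta> :: real
  assumes m: "m \<ge> 2"
    and g_smooth: "smooth_on UNIV g" and g0: "g 0 > 0"
    and gt_smooth: "smooth_on UNIV gt"
    and \<delta>: "0 < \<delta>" "\<delta> < 1"
    and gt_near: "\<And>x. \<bar>x\<bar> \<le> \<delta> \<Longrightarrow> gt x = g x"
    and gt_far: "\<And>x. \<bar>x\<bar> \<ge> 1 \<Longrightarrow> gt x = 9/10 * g 0"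
    and gt_d1: "\<And>x. 0 \<le> - x * deriv gt x \<and> - x * deriv gt x < g 0 / 5"
    and gt_d2: "\<And>x. \<bar>x^2 * deriv (deriv gt) x\<bar> < g 0 / 5"
    and gt_bounds: "\<And>x. 9/10 * g 0 \<le> gt x \<and> gt x \<le> g 0"
    and \<alpha>_smooth: "smooth_on {0..} \<alpha>"
    and \<alpha>_crit: "\<And>X. X \<ge> 0 \<Longrightarrow>
        deriv (\<lambda>s. gt (X * s) / g 0 * s ^ (2*m) - s) (\<alpha> X) = 0"
    and \<alpha>_bounds: "\<And>X. X \<ge> 0 \<Longrightarrow>
        (2 * real m) powr (- 1 / (2 * real m - 1)) \<le> \<alpha> X \<and>
        \<alpha> X \<le> (4/5 * (2 * real m)) powr (- 1 / (2 * real m - 1))"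
  shows "\<forall>X \<ge> 0.
      (let a = (\<lambda>Y. - (gt (Y * \<alpha> Y) / g 0 * \<alpha> Y ^ (2*m) - \<alpha> Y)) in
        a X \<ge> a 0 \<and>
        a 0 = (2 * real m) powr (- 1 / (2 * real m - 1))
              - (2 * real m) powr (- (2 * real m) / (2 * real m - 1)))"
proof (intro allI impI)
  fix X :: real
  assume X: "0 \<le> X"
  define n where "n = 2 * m"
  define c where "c = real n powr (- 1 / (real n - 1))"
  have n: "2 \<le> n"
    using m by (simp add: n_def)
  have c_eq: "c = (2 * real m) powr (- 1 / (2 * real m - 1))"
    by (simp add: c_def n_def)
  have c_pos: "0 < c"
    using n by (simp add: c_def)
  have c_power: "c ^ n = (2 * real m) powr (- (2 * real m) / (2 * real m - 1))"
    using c_pos by (simp add: c_def powr_realpow[symmetric] powr_powr n_def)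
  have gt0: "gt 0 = g 0"
    using gt_near \<delta> by simp
  have \<alpha>_ge: "c \<le> \<alpha> Y" if "0 \<le> Y" for Y
    using \<alpha>_bounds[OF that] c_eq by simp
  have \<alpha>0: "\<alpha> 0 = c"
    unfolding c_def
    using \<alpha>_ge[of 0] c_pos \<alpha>_crit[of 0] unfolding n_def[symmetric]
    by (intro scaled_profile_critical_point_at_zero[OF gt_smooth gt0 g0 n]) auto
  have "gt (X * \<alpha> X) / g 0 * \<alpha> X ^ n - \<alpha> X \<le> gt (X * c) / g 0 * c ^ n - c"
  proof (rule scaled_profile_critical_point_le[OF gt_smooth g0 n])
    show "- g 0 / 5 \<le> y * deriv gt y" "- g 0 / 5 \<le> y^2 * deriv (deriv gt) y" for y
      using gt_d1[of y] gt_d2[of y] by auto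
  qed (use gt_bounds c_pos \<alpha>_ge X \<alpha>_crit n_def in auto)
  also have "\<dots> \<le> c ^ n - c"
  proof -
    have "gt (X * c) / g 0 \<le> 1"
      using gt_bounds[of "X * c"] g0 by simp
    then have "gt (X * c) / g 0 * c ^ n \<le> c ^ n"
      using gt_bounds[of "X * c"] g0 c_pos by (intro mult_left_le_one_le) auto
    then show ?thesis
      by simp
  qed
  finally show "let a = (\<lambda>Y. - (gt (Y * \<alpha> Y) / g 0 * \<alpha> Y ^ (2*m) - \<alpha> Y)) in
      a X \<ge> a 0 \<and>
      a 0 = (2 * real m) powr (- 1 / (2 * real m - 1))
            - (2 * real m) powr (- (2 * real m) / (2 * real m - 1))"
    using \<alpha>0 gt0 g0 c_eq c_power by (simp add: n_def)
qed

end
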